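(* Let $X=\mathbb{Z}$, $\beta\in Sym(X)$ the translation $x\mapsto x+1$, and $n,m\geq1$. Let $c=c(a_1,\dots,a_n,b)$ be a nontrivial cyclically reduced word in $\mathbb{F}_{n+1}=\langle a_1,\dots,a_n,b\rangle$ with exponent sum of $b$ equal to zero, and $d=d(a'_1,\dots,a'_m,b')$ a nontrivial cyclically reduced word in $\mathbb{F}_{m+1}=\langle a'_1,\dots,a'_m,b'\rangle$ with exponent sum of $b'$ equal to zero. Let $\alpha=(\alpha_1,\dots,\alpha_n)\in Sym(X)^n$ be such that, for the action of $\mathbb{F}_{n+1}$ on $X$ given by $a_i\mapsto\alpha_i$, $b\mapsto\beta$ (so $c$ acts as $c(\alpha,\beta)$): the action is faithful and transitive; for every $w\in\mathbb{F}_{n+1}\setminus\langle c\rangle$ there are infinitely many $x$ with $cx=x$, $cwx=wx$, $wx\neq x$; there is a Følner sequence $(A_k)_{k\geq1}$ for this action consisting of pairwise disjoint sets with $|A_k|=k$, each pointwise fixed by $c$; for every $k\geq1$ there are infinitely many $\langle c\rangle$-orbits of size $k$; every $\langle c\rangle$-orbit is finite; and every finite index subgroup of $\mathbb{F}_{n+1}$ acts transitively. Let $\alpha'=(\alpha'_1,\dots,\alpha'_m)\in Sym(X)^m$ satisfy the same properties for $\mathbb{F}_{m+1}$ (via $a'_j\mapsto\alpha'_j$, $b'\mapsto\beta$) and $d$, with Følner sequence $(B_k)_{k\geq1}$. Let $Z=\{\sigma\in Sym(X):\sigma\, c(\alpha,\beta)=d(\alpha',\beta)\,\sigma\}$, with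 the topology of pointwise convergence. Then the set $\mathcal{O}_2=\{\sigma\in Z:\text{there is a subsequence }(k_l)_{l\geq1}\text{ with }\sigma(A_{k_l})=B_{k_l}\text{ for all }l\geq1\}$ is generic in $Z$.
   Context: A subset of a Baire space is meagre if it is a countable union of closed sets with empty interior, and generic (dense $G_\delta$) if its complement is meagre. $Z$ is closed in $Sym(X)$, hence a Baire space. A sequence $(A_k)$ of finite non-empty subsets is Følner for an action of a group $\Gamma$ if $|A_k\triangle gA_k|/|A_k|\to0$ for all $g\in\Gamma$. *)

theory Defs
  imports "HOL-Analysis.Analysis" "HOL-Algebra.Generated_Groups" "HOL-Algebra.Coset"
begin

(* Words in the free group on generators 0..N-1.  A letter is (i, e):
   generator i, inverted iff e = True. *)
type_synonym letter = "nat \<times> bool"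
type_synonym word = "letter list"

definition inv_letter :: "letter \<Rightarrow> letter" where
  "inv_letter l = (fst l, \<not> snd l)"

fun reduced :: "word \<Rightarrow> bool" where
  "reduced [] = True"
| "reduced [x] = True"
| "reduced (x # y # w) = (y \<noteq> inv_letter x \<and> reduced (y # w))"

fun reduce :: "word \<Rightarrow> word" where
  "reduce [] = []"
| "reduce (x # w) = (case reduce w of
      [] \<Rightarrow> [x]
    | y # r \<Rightarrow> (if y = inv_letter x then r else x # y # r))"

definition cyclically_reduced :: "word \<Rightarrow> bool" where
  "cyclically_reduced w \<longleftrightarrow> reduced w \<and> (w \<noteq> [] \<longrightarrow> last w \<noteq> inv_letter (hd w))"

definition words_on :: "nat \<Rightarrow> word set" where
  "words_on N = {w. \<forall>l\<in>set w. fst l < N}"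

definition free_grp :: "nat \<Rightarrow> word monoid" where
  "free_grp N = \<lparr>carrier = {w. reduced w \<and> w \<in> words_on N},
                 mult = (\<lambda>u v. reduce (u @ v)), one = []\<rparr>"

definition exp_sum :: "nat \<Rightarrow> word \<Rightarrow> int" where
  "exp_sum i w = (\<Sum>l\<leftarrow>w. if fst l = i then (if snd l then -1 else 1) else 0)"

definition beta :: "int \<Rightarrow> int" where
  "beta x = x + 1"

(* generators a_1..a_n are 0..n-1 and act by alpha 0 .. alpha (n-1); b is generator n, acting by beta *)
definition gens :: "nat \<Rightarrow> (nat \<Rightarrow> int \<Rightarrow> int) \<Rightarrow> nat \<Rightarrow> int \<Rightarrow> int" where
  "gens n \<alpha> i = (if i < n then \<alpha> i else beta)"

(* left action of a word: (g1 g2 ... gk) x = g1 (g2 (... gk x)) *)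
definition word_act :: "(nat \<Rightarrow> int \<Rightarrow> int) \<Rightarrow> word \<Rightarrow> int \<Rightarrow> int" where
  "word_act G w = foldr (\<lambda>l f. (if snd l then inv_into UNIV (G (fst l)) else G (fst l)) \<circ> f) w id"

definition foelner :: "('g \<Rightarrow> 'x \<Rightarrow> 'x) \<Rightarrow> 'g set \<Rightarrow> (nat \<Rightarrow> 'x set) \<Rightarrow> bool" where
  "foelner act \<Gamma> A \<longleftrightarrow>
     (\<forall>k\<ge>1. finite (A k) \<and> A k \<noteq> {}) \<and>
     (\<forall>g\<in>\<Gamma>. (\<lambda>k. real (card ((A k - act g ` A k) \<union> (act g ` A k - A k))) / real (card (A k)))
               \<longlonglongrightarrow> 0)"

definition orbit_of :: "(nat \<Rightarrow> int \<Rightarrow> int) \<Rightarrow> word set \<Rightarrow> int \<Rightarrow> int set" where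
  "orbit_of G H x = {word_act G h x | h. h \<in> H}"

definition good_action :: "nat \<Rightarrow> (nat \<Rightarrow> int \<Rightarrow> int) \<Rightarrow> word \<Rightarrow> (nat \<Rightarrow> int set) \<Rightarrow> bool" where
  "good_action n \<alpha> c A \<longleftrightarrow>
     (let F = free_grp (Suc n); G = gens n \<alpha>; C = generate F {c} in
       (\<forall>i<n. bij (\<alpha> i)) \<and>
       \<comment> \<open>faithful\<close>
       (\<forall>w\<in>carrier F. word_act G w = id \<longrightarrow> w = []) \<and>
       \<comment> \<open>transitive\<close>
       (\<forall>x y. \<exists>w\<in>carrier F. word_act G w x = y) \<and>
       \<comment> \<open>infinitely many common fixed points of c and w c w^-1, moved by w\<close>
       (\<forall>w\<in>carrier F - C. infinite {x. word_act G c x = x \<and>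
            word_act G c (word_act G w x) = word_act G w x \<and> word_act G w x \<noteq> x}) \<and>
       \<comment> \<open>Foelner sequence of pairwise disjoint sets of size k, pointwise fixed by c\<close>
       foelner (word_act G) (carrier F) A \<and>
       (\<forall>k\<ge>1. \<forall>l\<ge>1. k \<noteq> l \<longrightarrow> A k \<inter> A l = {}) \<and>
       (\<forall>k\<ge>1. card (A k) = k) \<and>
       (\<forall>k\<ge>1. \<forall>x\<in>A k. word_act G c x = x) \<and>
       \<comment> \<open>infinitely many <c>-orbits of each size k \<ge> 1\<close>
       (\<forall>k\<ge>1. infinite {Orb. (\<exists>x. Orb = orbit_of G C x) \<and> finite Orb \<and> card Orb = k}) \<and>
       \<comment> \<open>every <c>-orbit is finite\<close>
       (\<forall>x. finite (orbit_of G C x)) \<and>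
       \<comment> \<open>every finite index subgroup acts transitively\<close>
       (\<forall>H. subgroup H F \<and> finite (rcosets\<^bsub>F\<^esub> H) \<longrightarrow>
            (\<forall>x y. \<exists>h\<in>H. word_act G h x = y)))"

(* Sym(X) with the topology of pointwise convergence: subspace of Z^Z with Z discrete *)
definition pointwise_top :: "(int \<Rightarrow> int) topology" where
  "pointwise_top = product_topology (\<lambda>_. discrete_topology UNIV) UNIV"

definition meagre_in :: "'a topology \<Rightarrow> 'a set \<Rightarrow> bool" where
  "meagre_in T S \<longleftrightarrow> (\<exists>F :: nat \<Rightarrow> 'a set.
      (\<forall>k. closedin T (F k) \<and> T interior_of (F k) = {}) \<and> S = (\<Union>k. F k))"

definition generic_in :: "'a topology \<Rightarrow> 'a set \<Rightarrow> bool" where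
  "generic_in T S \<longleftrightarrow> S \<subseteq> topspace T \<and> meagre_in T (topspace T - S)"

end

theory Submission
  imports Defs "HOL-Combinatorics.Orbits" "HOL-Combinatorics.Cycles"
begin

text \<open>
  Only the cycle structure of \<open>f = c(\<alpha>, \<beta>)\<close> and \<open>g = d(\<alpha>', \<beta>)\<close> enters the argument: every point
  lies on a finite \<open>f\<close>-cycle, there are infinitely many \<open>f\<close>-cycles of every length, and the
  \<open>A\<^sub>k\<close> are pairwise disjoint sets of \<open>k\<close> fixed points of \<open>f\<close> (likewise for \<open>g\<close> and \<open>B\<^sub>k\<close>).

  Let \<open>U\<^sub>N\<close> be the set of \<open>\<sigma> \<in> Z\<close> with \<open>\<sigma>(A\<^sub>k) = B\<^sub>k\<close> for some \<open>k \<ge> N\<close>; it is open because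
  the \<open>A\<^sub>k\<close> are finite, and \<open>\<O>\<^sub>2\<close> is the intersection of all \<open>U\<^sub>N\<close>. For density, let \<open>\<sigma> \<in> Z\<close> and
  let \<open>E\<close> be finite. The union \<open>S\<close> of the \<open>f\<close>-cycles through \<open>E\<close> is finite and invariant, so
  some \<open>k \<ge> N\<close> has \<open>A\<^sub>k\<close> disjoint from \<open>S\<close> and \<open>B\<^sub>k\<close> disjoint from \<open>\<sigma>(S)\<close>. Combine \<open>\<sigma>\<close> on \<open>S\<close>
  with any bijection \<open>A\<^sub>k \<rightarrow> B\<^sub>k\<close>; outside these finite invariant sets both permutations
  still have countably infinitely many cycles of each length, so matching cycles of equal
  length extends this partial conjugacy to some \<open>\<tau> \<in> Z\<close> agreeing with \<open>\<sigma>\<close> on \<open>E\<close>.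
\<close>

section \<open>Cycles of a permutation\<close>

text \<open>The library's \<open>orbit f x\<close> is \<open>{(f ^^ n) x | n. 0 < n}\<close>, so \<open>x \<in> orbit f x\<close> says that \<open>x\<close> lies on a
  finite cycle of \<open>f\<close>.\<close>

lemma self_in_orbit_if_finite:
  assumes "inj f" and "finite (orbit f x)"
  shows "x \<in> orbit f x"
proof -
  have "range (\<lambda>n. (f ^^ Suc n) x) \<subseteq> orbit f x"
    using zero_less_Suc unfolding orbit_altdef by blast
  then have "\<not> inj (\<lambda>n. (f ^^ Suc n) x)"
    using assms(2) finite_imageD finite_subset infinite_UNIV_nat by blast
  then obtain i j where "i < j" and "(f ^^ Suc i) x = (f ^^ Suc j) x"
    by (metis (no_types, lifting) injI linorder_neqE_nat)
  then have "(f ^^ (j - i)) x = x"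
    using funpow_diff[OF assms(1), of "Suc i" "Suc j"] by simp
  with \<open>i < j\<close> show ?thesis
    by (auto simp: orbit_altdef intro: exI[of _ "j - i"])
qed

lemma inv_into_in_orbit:
  assumes "bij f" and "x \<in> orbit f x"
  shows "inv_into UNIV f x \<in> orbit f x"
proof -
  obtain n where "0 < n" and "(f ^^ n) x = x"
    using assms(2) by (auto simp: orbit_altdef)
  then have "f ((f ^^ (n - 1)) x) = x"
    by (metis Suc_diff_1 comp_apply funpow.simps(2))
  then have "inv_into UNIV f x = (f ^^ (n - 1)) x"
    using inv_into_f_f[OF bij_is_inj[OF assms(1)], of "(f ^^ (n - 1)) x"] by simp
  then show ?thesis
    using funpow_in_orbit[OF assms(2)] by simp
qed

lemma orbit_eq_if_mem:
  assumes "x \<in> orbit f x" and "y \<in> orbit f x"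
  shows "orbit f y = orbit f x"
  using assms by (intro orbit_cyclic_eq3) (auto simp: cyclic_on_def)

lemma funpow_eq_iff_mod_card_orbit:
  assumes "x \<in> orbit f x"
  shows "(f ^^ m) x = (f ^^ n) x \<longleftrightarrow> m mod card (orbit f x) = n mod card (orbit f x)"
proof -
  define k where "k = funpow_dist1 f x x"
  have inj: "inj_on (\<lambda>n. (f ^^ n) x) {0..<k}"
    unfolding k_def by (rule inj_on_funpow_dist1[OF assms])
  have k: "card (orbit f x) = k"
    using card_image[OF inj] orbit_conv_funpow_dist1[OF assms] by (simp add: k_def)
  have period: "(f ^^ j) x = (f ^^ (j mod k)) x" for j
    using funpow_mod_eq[where f=f and n=k and x=x and m=j] funpow_dist1_prop[OF assms] by (simp add: k_def)
  have "0 < k"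
    by (simp add: k_def)
  then show ?thesis
    using inj_onD[OF inj, of "m mod k" "n mod k"] period[of m] period[of n] k by auto
qed

lemma orbit_conjugacy:
  assumes x: "x \<in> orbit f x" and y: "y \<in> orbit g y"
    and same_card: "card (orbit f x) = card (orbit g y)"
  shows "\<exists>p. bij_betw p (orbit f x) (orbit g y) \<and> (\<forall>z\<in>orbit f x. p (f z) = g (p z))"
proof -
  have funpow_iff: "(f ^^ m) x = (f ^^ n) x \<longleftrightarrow> (g ^^ m) y = (g ^^ n) y" for m n
    using funpow_eq_iff_mod_card_orbit[OF x] funpow_eq_iff_mod_card_orbit[OF y] same_card by simp
  define p where "p z = (g ^^ (SOME n. (f ^^ n) x = z)) y" for z
  have p: "p ((f ^^ n) x) = (g ^^ n) y" for n
    unfolding p_def using someI[of "\<lambda>m. (f ^^ m) x = (f ^^ n) x" n] funpow_iff by blast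
  have orbit_f: "orbit f x = range (\<lambda>n. (f ^^ n) x)"
    using orbit_altdef_self_in[OF x] by auto
  have orbit_g: "orbit g y = range (\<lambda>n. (g ^^ n) y)"
    using orbit_altdef_self_in[OF y] by auto
  have "bij_betw p (orbit f x) (orbit g y)"
    unfolding bij_betw_def inj_on_def orbit_f orbit_g by (auto simp: p funpow_iff image_image)
  moreover have "p (f z) = g (p z)" if "z \<in> orbit f x" for z
    using that p[of "Suc _"] by (auto simp: orbit_f p)
  ultimately show ?thesis
    by blast
qed

lemma image_orbit_conjugate:
  assumes "\<sigma> \<circ> f = g \<circ> \<sigma>"
  shows "\<sigma> ` orbit f x = orbit g (\<sigma> x)"
proof -
  have "\<sigma> ((f ^^ n) x) = (g ^^ n) (\<sigma> x)" for n
    using assms by (induction n) (simp_all add: fun_eq_iff)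
  then show ?thesis
    unfolding orbit_altdef setcompr_eq_image image_image by simp
qed

lemma orbit_subset_Compl:
  assumes "x \<in> orbit f x" and "\<And>y. y \<in> P \<Longrightarrow> orbit f y \<subseteq> P" and "x \<notin> P"
  shows "orbit f x \<subseteq> - P"
  using assms orbit_swap by fastforce

section \<open>The free group\<close>

definition cancel_cons :: "letter \<Rightarrow> word \<Rightarrow> word" where
  "cancel_cons x w = (case w of [] \<Rightarrow> [x] | y # r \<Rightarrow> (if y = inv_letter x then r else x # y # r))"

lemma reduce_Cons: "reduce (x # w) = cancel_cons x (reduce w)"
  by (simp add: cancel_cons_def)

lemma inv_letter_inv_letter [simp]: "inv_letter (inv_letter x) = x"
  by (simp add: inv_letter_def)

lemma reduced_tl: "reduced (y # w) \<Longrightarrow> reduced w"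
  by (cases w) auto

lemma reduced_cancel_cons: "reduced w \<Longrightarrow> reduced (cancel_cons x w)"
  by (cases w) (auto simp: cancel_cons_def dest: reduced_tl)

lemma reduced_reduce: "reduced (reduce w)"
  by (induction w) (auto simp: reduce_Cons reduced_cancel_cons simp del: reduce.simps(2))

lemma reduce_reduced: "reduced w \<Longrightarrow> reduce w = w"
proof (induction w)
  case (Cons x w)
  then have "reduce w = w"
    using reduced_tl by blast
  with Cons.prems show ?case
    by (cases w) (auto simp: reduce_Cons cancel_cons_def simp del: reduce.simps(2))
qed simp

lemma reduce_append_reduce: "reduce (u @ reduce v) = reduce (u @ v)"
  by (induction u) (auto simp: reduce_Cons reduce_reduced reduced_reduce simp del: reduce.simps(2))

lemma cancel_cons_inv_letter: "reduced w \<Longrightarrow> cancel_cons x (cancel_cons (inv_letter x) w) = w"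
  by (cases w rule: reduced.cases) (auto simp: cancel_cons_def)

lemma reduce_cancel_cons_append:
  "reduce (cancel_cons x w @ v) = cancel_cons x (reduce (w @ v))"
proof (cases w)
  case (Cons y r)
  show ?thesis
  proof (cases "y = inv_letter x")
    case True
    then have "reduce (w @ v) = cancel_cons (inv_letter x) (reduce (r @ v))"
      using Cons by (simp add: reduce_Cons del: reduce.simps(2))
    then show ?thesis
      using True Cons cancel_cons_inv_letter[OF reduced_reduce, of x "r @ v"]
      by (simp add: cancel_cons_def)
  qed (use Cons in \<open>simp add: cancel_cons_def reduce_Cons del: reduce.simps(2)\<close>)
qed (simp add: cancel_cons_def reduce_Cons del: reduce.simps(2))

lemma reduce_reduce_append: "reduce (reduce u @ v) = reduce (u @ v)"
  by (induction u) (simp_all add: reduce_Cons reduce_cancel_cons_append del: reduce.simps(2))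

definition word_inv :: "word \<Rightarrow> word" where
  "word_inv w = rev (map inv_letter w)"

lemma reduce_word_inv_append: "reduce (word_inv w @ w @ v) = reduce v"
proof (induction w)
  case (Cons x w)
  have "reduce (word_inv (x # w) @ (x # w) @ v) = reduce (word_inv w @ inv_letter x # x # w @ v)"
    by (simp add: word_inv_def)
  also have "\<dots> = reduce (word_inv w @ reduce (inv_letter x # x # w @ v))"
    by (rule reduce_append_reduce[symmetric])
  also have "reduce (inv_letter x # x # w @ v) = reduce (w @ v)"
    using cancel_cons_inv_letter[OF reduced_reduce, of "inv_letter x" "w @ v"]
    by (simp add: reduce_Cons del: reduce.simps(2))
  also have "reduce (word_inv w @ reduce (w @ v)) = reduce v"
    using Cons.IH by (simp add: reduce_append_reduce)
  finally show ?case .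
qed (simp add: word_inv_def)

lemma set_reduce: "set (reduce w) \<subseteq> set w"
  by (induction w) (auto simp: reduce_Cons cancel_cons_def split: list.splits simp del: reduce.simps(2))

lemma words_on_reduce: "w \<in> words_on N \<Longrightarrow> reduce w \<in> words_on N"
  using set_reduce by (fastforce simp: words_on_def)

lemma words_on_word_inv: "w \<in> words_on N \<Longrightarrow> word_inv w \<in> words_on N"
  by (auto simp: words_on_def word_inv_def inv_letter_def)

lemma group_free_grp: "group (free_grp N)"
proof (rule groupI)
  fix x y
  assume "x \<in> carrier (free_grp N)" "y \<in> carrier (free_grp N)"
  then have "x @ y \<in> words_on N"
    by (auto simp: free_grp_def words_on_def)
  then show "x \<otimes>\<^bsub>free_grp N\<^esub> y \<in> carrier (free_grp N)"
    by (simp add: free_grp_def reduced_reduce words_on_reduce)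
next
  fix x
  assume x: "x \<in> carrier (free_grp N)"
  show "\<exists>y\<in>carrier (free_grp N). y \<otimes>\<^bsub>free_grp N\<^esub> x = \<one>\<^bsub>free_grp N\<^esub>"
  proof
    show "reduce (word_inv x) \<otimes>\<^bsub>free_grp N\<^esub> x = \<one>\<^bsub>free_grp N\<^esub>"
      using reduce_word_inv_append[of x "[]"] by (simp add: free_grp_def reduce_reduce_append)
    show "reduce (word_inv x) \<in> carrier (free_grp N)"
      using x by (simp add: free_grp_def reduced_reduce words_on_reduce words_on_word_inv)
  qed
qed (auto simp: free_grp_def reduce_reduced reduce_append_reduce reduce_reduce_append words_on_def)

section \<open>The action of words\<close>

definition letter_act :: "(nat \<Rightarrow> int \<Rightarrow> int) \<Rightarrow> letter \<Rightarrow> int \<Rightarrow> int" where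
  "letter_act G l = (if snd l then inv_into UNIV (G (fst l)) else G (fst l))"

lemma word_act_Nil [simp]: "word_act G [] = id"
  by (simp add: word_act_def)

lemma word_act_Cons: "word_act G (x # w) = letter_act G x \<circ> word_act G w"
  by (simp add: word_act_def letter_act_def)

lemma word_act_append: "word_act G (u @ v) = word_act G u \<circ> word_act G v"
  by (induction u) (simp_all add: word_act_Cons comp_assoc)

lemma nat_pow_in_generate: "c [^]\<^bsub>H\<^esub> (n::nat) \<in> generate H {c}"
proof (induction n)
  case 0
  then show ?case
    by (simp add: generate.one)
next
  case (Suc n)
  then show ?case
    by (simp add: generate.eng generate.incl)
qed

context
  fixes G :: "nat \<Rightarrow> int \<Rightarrow> int"
  assumes bij_G: "\<And>i. bij (G i)"
begin

lemma bij_letter_act: "bij (letter_act G x)"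
  by (simp add: letter_act_def bij_G bij_imp_bij_inv)

lemma letter_act_inv_letter: "letter_act G (inv_letter x) \<circ> letter_act G x = id"
  using bij_G[of "fst x"]
  by (auto simp: letter_act_def inv_letter_def fun_eq_iff bij_def surj_f_inv_f)

lemma bij_word_act: "bij (word_act G w)"
proof (induction w)
  case (Cons x w)
  then show ?case
    unfolding word_act_Cons by (rule bij_comp[OF _ bij_letter_act])
qed (simp only: word_act_Nil bij_id)

lemma word_act_cancel_cons: "word_act G (cancel_cons x w) = word_act G (x # w)"
proof (cases w)
  case (Cons y r)
  have "letter_act G x \<circ> letter_act G (inv_letter x) = id"
    using letter_act_inv_letter[of "inv_letter x"] by simp
  then show ?thesis
    using Cons by (auto simp: cancel_cons_def word_act_Cons comp_assoc[symmetric])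
qed (simp add: cancel_cons_def)

lemma word_act_reduce: "word_act G (reduce w) = word_act G w"
  by (induction w) (simp_all add: reduce_Cons word_act_cancel_cons word_act_Cons del: reduce.simps(2))

lemma word_act_mult: "word_act G (u \<otimes>\<^bsub>free_grp N\<^esub> v) = word_act G u \<circ> word_act G v"
  by (simp add: free_grp_def word_act_reduce word_act_append)

lemma word_act_inv:
  assumes "u \<in> carrier (free_grp N)"
  shows "word_act G (inv\<^bsub>free_grp N\<^esub> u) = inv_into UNIV (word_act G u)"
proof -
  have left_inv: "word_act G (inv\<^bsub>free_grp N\<^esub> u) \<circ> word_act G u = id"
    using group.l_inv[OF group_free_grp assms] word_act_mult[symmetric]
    by (simp add: free_grp_def)
  have "word_act G u \<circ> inv_into UNIV (word_act G u) = id"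
    using bij_word_act[of u] by (simp add: bij_is_surj flip: surj_iff)
  then have "word_act G (inv\<^bsub>free_grp N\<^esub> u)
      = (word_act G (inv\<^bsub>free_grp N\<^esub> u) \<circ> word_act G u) \<circ> inv_into UNIV (word_act G u)"
    by (simp add: comp_assoc)
  with left_inv show ?thesis
    by simp
qed

lemma word_act_nat_pow: "word_act G (c [^]\<^bsub>free_grp N\<^esub> (n::nat)) = word_act G c ^^ n"
proof (induction n)
  case 0
  then show ?case
    by (simp add: free_grp_def)
next
  case (Suc n)
  then show ?case
    by (simp add: word_act_mult fun_eq_iff funpow_swap1)
qed

lemma orbit_subset_orbit_of_cyclic:
  "orbit (word_act G c) x \<subseteq> orbit_of G (generate (free_grp N) {c}) x"
proof
  fix z
  assume "z \<in> orbit (word_act G c) x"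
  then obtain n where "z = (word_act G c ^^ n) x"
    by (auto simp: orbit_altdef)
  then have "z = word_act G (c [^]\<^bsub>free_grp N\<^esub> n) x"
    by (simp add: word_act_nat_pow)
  then show "z \<in> orbit_of G (generate (free_grp N) {c}) x"
    using nat_pow_in_generate[where H="free_grp N" and c=c and n=n] unfolding orbit_of_def by blast
qed

lemma word_act_generate_in_orbit:
  assumes c: "c \<in> carrier (free_grp N)" and periodic: "\<And>y. y \<in> orbit (word_act G c) y"
    and "h \<in> generate (free_grp N) {c}"
  shows "word_act G h x \<in> orbit (word_act G c) x"
  using assms(3)
proof (induction arbitrary: x rule: generate.induct)
  case one
  then show ?case
    using periodic by (simp add: free_grp_def)
next
  case (incl h)
  then show ?case
    by (simp add: orbit.base)
next
  case (inv h)
  then show ?case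
    using inv_into_in_orbit[OF bij_word_act periodic] word_act_inv[OF c] by simp
next
  case (eng h1 h2)
  then show ?case
    using orbit_trans by (fastforce simp: word_act_mult)
qed

lemma orbit_of_cyclic_subgroup:
  assumes c: "c \<in> carrier (free_grp N)"
    and finite_orbits: "\<And>y. finite (orbit_of G (generate (free_grp N) {c}) y)"
  shows "orbit_of G (generate (free_grp N) {c}) x = orbit (word_act G c) x"
    and "x \<in> orbit (word_act G c) x"
proof -
  have periodic: "y \<in> orbit (word_act G c) y" for y
    using self_in_orbit_if_finite[OF bij_is_inj[OF bij_word_act]]
      finite_subset[OF orbit_subset_orbit_of_cyclic finite_orbits] by blast
  then have "orbit_of G (generate (free_grp N) {c}) x \<subseteq> orbit (word_act G c) x"
    using word_act_generate_in_orbit[OF c] unfolding orbit_of_def by blast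
  with orbit_subset_orbit_of_cyclic show "orbit_of G (generate (free_grp N) {c}) x = orbit (word_act G c) x"
    by blast
  show "x \<in> orbit (word_act G c) x"
    by (rule periodic)
qed

end

section \<open>The cycle structure of a good action\<close>

definition abundant_finite_cycles :: "('a \<Rightarrow> 'a) \<Rightarrow> bool" where
  "abundant_finite_cycles f \<longleftrightarrow>
     (\<forall>x. x \<in> orbit f x) \<and> (\<forall>k\<ge>1. infinite {S \<in> range (orbit f). card S = k})"

definition fixed_block_family :: "('a \<Rightarrow> 'a) \<Rightarrow> (nat \<Rightarrow> 'a set) \<Rightarrow> bool" where
  "fixed_block_family f A \<longleftrightarrow>
     disjoint_family_on A {1..} \<and> (\<forall>k\<ge>1. card (A k) = k \<and> (\<forall>x\<in>A k. f x = x))"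

lemma bij_gens: "\<forall>i<n. bij (\<alpha> i) \<Longrightarrow> bij (gens n \<alpha> i)"
  unfolding gens_def beta_def by (auto intro: bij_betwI[where g="\<lambda>x. x - 1"])

lemma good_action_cycle_structure:
  assumes "good_action n \<alpha> c A" and "c \<in> words_on (Suc n)" and "cyclically_reduced c"
  shows "abundant_finite_cycles (word_act (gens n \<alpha>) c) \<and> fixed_block_family (word_act (gens n \<alpha>) c) A"
proof -
  let ?G = "gens n \<alpha>" and ?C = "generate (free_grp (Suc n)) {c}"
  note good = assms(1)[unfolded good_action_def Let_def]
  have bij_G: "\<And>i. bij (?G i)"
    using good by (simp add: bij_gens)
  have c: "c \<in> carrier (free_grp (Suc n))"
    using assms(2,3) by (simp add: free_grp_def cyclically_reduced_def)
  have finite_orbits: "\<And>y. finite (orbit_of ?G ?C y)"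
    using good by simp
  note orbits = orbit_of_cyclic_subgroup[where G="?G", OF bij_G c finite_orbits]
  have "{S. (\<exists>x. S = orbit_of ?G ?C x) \<and> finite S \<and> card S = k}
      = {S \<in> range (orbit (word_act ?G c)). card S = k}" for k
    using orbits(1) finite_orbits by auto
  then have "abundant_finite_cycles (word_act ?G c)"
    using good orbits(2) by (simp add: abundant_finite_cycles_def)
  moreover have "fixed_block_family (word_act ?G c) A"
    using good by (auto simp: fixed_block_family_def disjoint_family_on_def)
  ultimately show ?thesis
    by blast
qed

lemma finite_fixed_block:
  assumes "fixed_block_family f A" and "k \<ge> 1"
  shows "finite (A k)"
proof -
  have "card (A k) = k"
    using assms by (simp add: fixed_block_family_def)
  with assms(2) show ?thesis
    using card.infinite by fastforce
qed

section \<open>Conjugating permutations with abundant finite cycles\<close>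

lemma bij_betw_fibrewise:
  fixes s :: "'a \<Rightarrow> 'k" and t :: "'b \<Rightarrow> 'k"
  assumes "countable X" and "countable Y"
    and fibres: "\<And>k. k \<in> s ` X \<union> t ` Y \<Longrightarrow>
      infinite {x \<in> X. s x = k} \<and> infinite {y \<in> Y. t y = k}"
  shows "\<exists>\<Phi>. bij_betw \<Phi> X Y \<and> (\<forall>x\<in>X. t (\<Phi> x) = s x)"
proof -
  define X' where "X' k = {x \<in> X. s x = k}" for k
  define Y' where "Y' k = {y \<in> Y. t y = k}" for k
  define \<Phi> where "\<Phi> x = (from_nat_into (Y' (s x)) \<circ> to_nat_on (X' (s x))) x" for x
  have bij_fibre: "bij_betw \<Phi> (X' k) (Y' k)" if "k \<in> s ` X" for k
  proof -
    have "bij_betw (from_nat_into (Y' k) \<circ> to_nat_on (X' k)) (X' k) (Y' k)"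
      using fibres[of k] that assms(1,2)
      by (intro bij_betw_trans[OF to_nat_on_infinite bij_betw_from_nat_into])
        (auto simp: X'_def Y'_def intro: countable_subset)
    then show ?thesis
      by (rule bij_betw_cong[THEN iffD1, rotated]) (simp add: \<Phi>_def X'_def)
  qed
  then have "bij_betw \<Phi> (\<Union>k\<in>s ` X. X' k) (\<Union>k\<in>s ` X. Y' k)"
    by (intro bij_betw_UNION_disjoint) (auto simp: disjoint_family_on_def Y'_def)
  moreover have "(\<Union>k\<in>s ` X. X' k) = X"
    by (auto simp: X'_def)
  moreover have "(\<Union>k\<in>s ` X. Y' k) = Y"
  proof -
    have "t y \<in> s ` X" if "y \<in> Y" for y
    proof -
      have "infinite {x \<in> X. s x = t y}"
        using fibres[of "t y"] that by blast
      then obtain x where "x \<in> X" and "s x = t y"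
        using not_finite_existsD by blast
      then show ?thesis
        by force
    qed
    then show ?thesis
      by (auto simp: Y'_def)
  qed
  moreover have "t (\<Phi> x) = s x" if "x \<in> X" for x
    using bij_betwE[OF bij_fibre[of "s x"]] that by (auto simp: X'_def Y'_def)
  ultimately show ?thesis
    by auto
qed

lemma disjoint_family_on_orbits:
  assumes g: "\<And>y. y \<in> orbit g y" and "inj_on \<Phi> X" and "\<Phi> ` X \<subseteq> range (orbit g)"
  shows "disjoint_family_on \<Phi> X"
  unfolding disjoint_family_on_def
proof (intro ballI impI)
  fix S1 S2
  assume S: "S1 \<in> X" "S2 \<in> X" "S1 \<noteq> S2"
  then obtain y1 y2 where y: "\<Phi> S1 = orbit g y1" "\<Phi> S2 = orbit g y2"
    using assms(3) by (metis image_subset_iff rangeE)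
  have "\<Phi> S1 \<noteq> \<Phi> S2"
    using inj_onD[OF assms(2) _ S(1,2)] S(3) by blast
  show "\<Phi> S1 \<inter> \<Phi> S2 = {}"
  proof (rule ccontr)
    assume "\<Phi> S1 \<inter> \<Phi> S2 \<noteq> {}"
    then obtain z where z: "z \<in> orbit g y1" "z \<in> orbit g y2"
      unfolding y by blast
    have "orbit g y1 = orbit g y2"
      using orbit_eq_if_mem[OF g z(1)] orbit_eq_if_mem[OF g z(2)] by simp
    with \<open>\<Phi> S1 \<noteq> \<Phi> S2\<close> y show False
      by simp
  qed
qed

lemma conjugacy_from_orbit_matching:
  assumes f: "\<And>x. x \<in> orbit f x" and g: "\<And>y. y \<in> orbit g y"
    and U: "\<And>x. x \<in> U \<Longrightarrow> orbit f x \<subseteq> U" and V: "\<And>y. y \<in> V \<Longrightarrow> orbit g y \<subseteq> V"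
    and \<Phi>: "bij_betw \<Phi> (orbit f ` U) (orbit g ` V)"
    and card_\<Phi>: "\<And>x. x \<in> U \<Longrightarrow> card (\<Phi> (orbit f x)) = card (orbit f x)"
  shows "\<exists>\<psi>. bij_betw \<psi> U V \<and> (\<forall>x\<in>U. \<psi> (f x) = g (\<psi> x))"
proof -
  have "\<exists>p. bij_betw p S (\<Phi> S) \<and> (\<forall>z\<in>S. p (f z) = g (p z))" if "S \<in> orbit f ` U" for S
  proof -
    obtain x y where "x \<in> U" "S = orbit f x" "y \<in> V" "\<Phi> S = orbit g y"
      using \<open>S \<in> orbit f ` U\<close> bij_betwE[OF \<Phi>] by blast
    then show ?thesis
      using orbit_conjugacy[OF f g, of x y] card_\<Phi>[of x] by simp
  qed
  then obtain p where p: "\<And>S. S \<in> orbit f ` U \<Longrightarrow>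
      bij_betw (p S) S (\<Phi> S) \<and> (\<forall>z\<in>S. p S (f z) = g (p S z))"
    by metis
  define \<psi> where "\<psi> x = p (orbit f x) x" for x
  have pieces: "bij_betw \<psi> S (\<Phi> S)" if S: "S \<in> orbit f ` U" for S
  proof -
    have "\<psi> z = p S z" if "z \<in> S" for z
      using that S orbit_eq_if_mem[OF f] by (auto simp: \<psi>_def)
    then show ?thesis
      using bij_betw_cong[of S \<psi> "p S" "\<Phi> S"] p[OF S] by simp
  qed
  have "disjoint_family_on \<Phi> (orbit f ` U)"
    using disjoint_family_on_orbits[OF g bij_betw_imp_inj_on[OF \<Phi>]] bij_betw_imp_surj_on[OF \<Phi>]
    by blast
  then have "bij_betw \<psi> (\<Union>S\<in>orbit f ` U. S) (\<Union>S\<in>orbit f ` U. \<Phi> S)"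
    using pieces by (rule bij_betw_UNION_disjoint)
  moreover have "(\<Union>S\<in>orbit f ` U. S) = U"
    using U f by blast
  moreover have "(\<Union>S\<in>orbit f ` U. \<Phi> S) = V"
    using V g by (auto simp: bij_betw_imp_surj_on[OF \<Phi>])
  moreover have "\<psi> (f x) = g (\<psi> x)" if "x \<in> U" for x
    using p[of "orbit f x"] that f orbit_eq_if_mem[OF f orbit.base] by (simp add: \<psi>_def)
  ultimately show ?thesis
    by auto
qed

lemma card_orbit_ge_1:
  assumes "x \<in> orbit f x"
  shows "card (orbit f x) \<ge> 1"
  using finite_orbit[OF assms] by (simp add: Suc_le_eq card_gt_0_iff orbit_nonempty)

lemma infinite_orbits_outside_finite:
  assumes "abundant_finite_cycles f" and "finite P" and "k \<ge> 1"
  shows "infinite {S \<in> orbit f ` (- P). card S = k}"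
proof -
  have "infinite {S \<in> range (orbit f). card S = k}"
    using assms(1,3) by (simp add: abundant_finite_cycles_def)
  moreover have "{S \<in> range (orbit f). card S = k} \<subseteq> {S \<in> orbit f ` (- P). card S = k} \<union> orbit f ` P"
    by blast
  ultimately have "infinite ({S \<in> orbit f ` (- P). card S = k} \<union> orbit f ` P)"
    using finite_subset by blast
  with assms(2) show ?thesis
    by simp
qed

lemma ex_card_preserving_orbit_bij:
  fixes f :: "'a::countable \<Rightarrow> 'a" and g :: "'b::countable \<Rightarrow> 'b"
  assumes f: "abundant_finite_cycles f" and g: "abundant_finite_cycles g"
    and "finite P" and "finite Q"
  shows "\<exists>\<Phi>. bij_betw \<Phi> (orbit f ` (- P)) (orbit g ` (- Q))
    \<and> (\<forall>S\<in>orbit f ` (- P). card (\<Phi> S) = card S)"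
proof (rule bij_betw_fibrewise)
  fix k
  assume k: "k \<in> card ` orbit f ` (- P) \<union> card ` orbit g ` (- Q)"
  have "\<And>x. x \<in> orbit f x" and "\<And>y. y \<in> orbit g y"
    using f g by (simp_all add: abundant_finite_cycles_def)
  with k have "k \<ge> 1"
    using card_orbit_ge_1[of _ f] card_orbit_ge_1[of _ g] by auto
  then show "infinite {S \<in> orbit f ` (- P). card S = k} \<and> infinite {S \<in> orbit g ` (- Q). card S = k}"
    using infinite_orbits_outside_finite[OF f \<open>finite P\<close>] infinite_orbits_outside_finite[OF g \<open>finite Q\<close>]
    by blast
qed (simp_all add: countableI_type)

lemma extend_conjugacy:
  fixes f :: "'a::countable \<Rightarrow> 'a" and g :: "'b::countable \<Rightarrow> 'b"
  assumes f: "abundant_finite_cycles f" and g: "abundant_finite_cycles g"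
    and "finite P" and P: "\<And>x. x \<in> P \<Longrightarrow> orbit f x \<subseteq> P"
    and "finite Q" and Q: "\<And>y. y \<in> Q \<Longrightarrow> orbit g y \<subseteq> Q"
    and h: "bij_betw h P Q" and h_conj: "\<And>x. x \<in> P \<Longrightarrow> h (f x) = g (h x)"
  shows "\<exists>\<tau>. bij \<tau> \<and> \<tau> \<circ> f = g \<circ> \<tau> \<and> (\<forall>x\<in>P. \<tau> x = h x)"
proof -
  have f_periodic: "\<And>x. x \<in> orbit f x" and g_periodic: "\<And>y. y \<in> orbit g y"
    using f g by (simp_all add: abundant_finite_cycles_def)
  have U: "orbit f x \<subseteq> - P" if "x \<in> - P" for x
    using orbit_subset_Compl[OF f_periodic P] that by blast
  have V: "orbit g y \<subseteq> - Q" if "y \<in> - Q" for y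
    using orbit_subset_Compl[OF g_periodic Q] that by blast
  obtain \<Phi> where \<Phi>: "bij_betw \<Phi> (orbit f ` (- P)) (orbit g ` (- Q))"
    and card_\<Phi>: "\<forall>S\<in>orbit f ` (- P). card (\<Phi> S) = card S"
    using ex_card_preserving_orbit_bij[OF f g \<open>finite P\<close> \<open>finite Q\<close>] by blast
  obtain \<psi> where \<psi>: "bij_betw \<psi> (- P) (- Q)" and \<psi>_conj: "\<forall>x\<in>- P. \<psi> (f x) = g (\<psi> x)"
    using conjugacy_from_orbit_matching[OF f_periodic g_periodic U V \<Phi>] card_\<Phi> by blast
  define \<tau> where "\<tau> x = (if x \<in> P then h x else \<psi> x)" for x
  have "bij_betw \<tau> (P \<union> - P) (Q \<union> - Q)"
    unfolding \<tau>_def by (rule bij_betw_disjoint_Un[OF h \<psi>]) auto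
  moreover have "\<tau> (f x) = g (\<tau> x)" for x
  proof (cases "x \<in> P")
    case True
    then show ?thesis
      using P[OF True] orbit.base h_conj by (fastforce simp: \<tau>_def)
  next
    case False
    then show ?thesis
      using U[of x] orbit.base \<psi>_conj by (fastforce simp: \<tau>_def)
  qed
  ultimately show ?thesis
    by (auto simp: \<tau>_def fun_eq_iff)
qed

lemma orbit_subset_Un_fixed_points:
  assumes "\<And>x. x \<in> S \<Longrightarrow> orbit f x \<subseteq> S" and "\<forall>x\<in>F. f x = x" and "x \<in> S \<union> F"
  shows "orbit f x \<subseteq> S \<union> F"
proof (cases "x \<in> S")
  case False
  with assms(2,3) have "orbit f x = {x}"
    by (simp add: orbit_eq_singleton_iff)
  with assms(3) show ?thesis
    by simp
qed (use assms(1) in blast)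

lemma conjugacy_Un_fixed_points:
  assumes \<sigma>: "inj \<sigma>" "\<sigma> \<circ> f = g \<circ> \<sigma>" and S: "\<forall>x\<in>S. f x \<in> S"
    and b: "bij_betw b A' B'" and A': "\<forall>x\<in>A'. f x = x" "A' \<inter> S = {}"
    and B': "\<forall>y\<in>B'. g y = y" "B' \<inter> \<sigma> ` S = {}"
  shows "bij_betw (\<lambda>x. if x \<in> S then \<sigma> x else b x) (S \<union> A') (\<sigma> ` S \<union> B')" (is "bij_betw ?h _ _")
    and "\<And>x. x \<in> S \<union> A' \<Longrightarrow>
      (if f x \<in> S then \<sigma> (f x) else b (f x)) = g (if x \<in> S then \<sigma> x else b x)"
proof -
  show "bij_betw ?h (S \<union> A') (\<sigma> ` S \<union> B')"
    by (rule bij_betw_disjoint_Un[OF inj_on_imp_bij_betw[OF inj_on_subset[OF \<sigma>(1) subset_UNIV]] b])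
      (use A'(2) B'(2) in blast)+
  show "?h (f x) = g (?h x)" if "x \<in> S \<union> A'" for x
  proof (cases "x \<in> S")
    case True
    with S have "?h (f x) = \<sigma> (f x)"
      by simp
    also have "\<dots> = g (\<sigma> x)"
      using \<sigma>(2) by (metis comp_apply)
    finally show ?thesis
      using True by simp
  next
    case False
    with that A'(1) B'(1) bij_betwE[OF b] show ?thesis
      by simp
  qed
qed

lemma extend_conjugacy_by_fixed_blocks:
  fixes f g \<sigma> :: "'a::countable \<Rightarrow> 'a"
  assumes f: "abundant_finite_cycles f" and g: "abundant_finite_cycles g"
    and \<sigma>: "bij \<sigma>" "\<sigma> \<circ> f = g \<circ> \<sigma>"
    and "finite S" and S: "\<And>x. x \<in> S \<Longrightarrow> orbit f x \<subseteq> S"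
    and "finite A'" "finite B'" "card A' = card B'"
    and A': "\<forall>x\<in>A'. f x = x" "A' \<inter> S = {}" and B': "\<forall>y\<in>B'. g y = y" "B' \<inter> \<sigma> ` S = {}"
  shows "\<exists>\<tau>. bij \<tau> \<and> \<tau> \<circ> f = g \<circ> \<tau> \<and> (\<forall>x\<in>S. \<tau> x = \<sigma> x) \<and> \<tau> ` A' = B'"
proof -
  have T: "orbit g y \<subseteq> \<sigma> ` S" if "y \<in> \<sigma> ` S" for y
    using that S image_orbit_conjugate[OF \<sigma>(2)] by blast
  obtain b where b: "bij_betw b A' B'"
    using finite_same_card_bij \<open>finite A'\<close> \<open>finite B'\<close> \<open>card A' = card B'\<close> by blast
  define h where "h = (\<lambda>x. if x \<in> S then \<sigma> x else b x)"
  have "\<forall>x\<in>S. f x \<in> S"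
    using S orbit.base[of f] by blast
  note h = conjugacy_Un_fixed_points[OF bij_is_inj[OF \<sigma>(1)] \<sigma>(2) this b A' B']
  have h_conj: "h (f x) = g (h x)" if "x \<in> S \<union> A'" for x
    using h(2)[OF that] by (simp add: h_def)
  have "finite (S \<union> A')" and "finite (\<sigma> ` S \<union> B')"
    using \<open>finite S\<close> \<open>finite A'\<close> \<open>finite B'\<close> by simp_all
  then obtain \<tau> where \<tau>: "bij \<tau>" "\<tau> \<circ> f = g \<circ> \<tau>" "\<forall>x\<in>S \<union> A'. \<tau> x = h x"
    using extend_conjugacy[OF f g _ orbit_subset_Un_fixed_points[OF S A'(1)]
        _ orbit_subset_Un_fixed_points[OF T B'(1)] h(1)[folded h_def] h_conj] by blast
  have "\<tau> ` A' = b ` A'"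
    by (rule image_cong[OF refl]) (use \<tau>(3) A'(2) in \<open>auto simp: h_def\<close>)
  then have "\<tau> ` A' = B'"
    using bij_betw_imp_surj_on[OF b] by simp
  moreover have "\<forall>x\<in>S. \<tau> x = \<sigma> x"
    using \<tau>(3) by (simp add: h_def)
  ultimately show ?thesis
    using \<tau>(1,2) by blast
qed

lemma finite_blocks_meeting:
  assumes "disjoint_family_on A I" and "finite S"
  shows "finite {k \<in> I. A k \<inter> S \<noteq> {}}"
proof -
  have "finite {k \<in> I. y \<in> A k}" for y
  proof (cases "\<exists>k\<in>I. y \<in> A k")
    case True
    then obtain k where "k \<in> I" "y \<in> A k"
      by blast
    then have "{k \<in> I. y \<in> A k} \<subseteq> {k}"
      using assms(1) by (auto simp: disjoint_family_on_def)
    then show ?thesis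
      using finite_subset by blast
  next
    case False
    then have "{k \<in> I. y \<in> A k} = {}"
      by blast
    then show ?thesis
      by (simp only: finite.emptyI)
  qed
  moreover have "{k \<in> I. A k \<inter> S \<noteq> {}} = (\<Union>y\<in>S. {k \<in> I. y \<in> A k})"
    by blast
  ultimately show ?thesis
    using assms(2) by simp
qed

lemma ex_block_avoiding:
  fixes A :: "nat \<Rightarrow> 'a set" and B :: "nat \<Rightarrow> 'b set"
  assumes "disjoint_family_on A {1..}" "disjoint_family_on B {1..}" "finite S" "finite T"
  shows "\<exists>k\<ge>N. k \<ge> 1 \<and> A k \<inter> S = {} \<and> B k \<inter> T = {}"
proof -
  let ?bad = "{k \<in> {1..}. A k \<inter> S \<noteq> {}} \<union> {k \<in> {1..}. B k \<inter> T \<noteq> {}}"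
  have "finite ?bad"
    using finite_blocks_meeting[OF assms(1,3)] finite_blocks_meeting[OF assms(2,4)]
    by (rule finite_UnI)
  then have "infinite (UNIV - ?bad)"
    by (simp add: Diff_infinite_finite)
  then obtain k where "k \<ge> max N 1" and "k \<notin> ?bad"
    unfolding infinite_nat_iff_unbounded_le by blast
  then show ?thesis
    by auto
qed

lemma conjugacy_matching_block:
  fixes f g \<sigma> :: "'a::countable \<Rightarrow> 'a"
  assumes f: "abundant_finite_cycles f" and g: "abundant_finite_cycles g"
    and A: "fixed_block_family f A" and B: "fixed_block_family g B"
    and \<sigma>: "bij \<sigma>" "\<sigma> \<circ> f = g \<circ> \<sigma>" and "finite E"
  shows "\<exists>k\<ge>N. k \<ge> 1 \<and> (\<exists>\<tau>. bij \<tau> \<and> \<tau> \<circ> f = g \<circ> \<tau> \<and> (\<forall>x\<in>E. \<tau> x = \<sigma> x) \<and> \<tau> ` A k = B k)"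
proof -
  have f_periodic: "\<And>x. x \<in> orbit f x"
    using f by (simp add: abundant_finite_cycles_def)
  define S where "S = (\<Union>x\<in>E. orbit f x)"
  have "finite S"
    using \<open>finite E\<close> finite_orbit[OF f_periodic] by (simp add: S_def)
  have S: "orbit f x \<subseteq> S" if "x \<in> S" for x
    using that orbit_eq_if_mem[OF f_periodic] by (auto simp: S_def)
  obtain k where k: "k \<ge> N" "k \<ge> 1" "A k \<inter> S = {}" "B k \<inter> \<sigma> ` S = {}"
    using ex_block_avoiding[of A B S "\<sigma> ` S" N] A B \<open>finite S\<close>
    by (auto simp: fixed_block_family_def)
  have card: "card (A k) = card (B k)" and fixed: "\<forall>x\<in>A k. f x = x" "\<forall>y\<in>B k. g y = y"
    using A B k(2) by (simp_all add: fixed_block_family_def)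
  obtain \<tau> where "bij \<tau>" "\<tau> \<circ> f = g \<circ> \<tau>" "\<forall>x\<in>S. \<tau> x = \<sigma> x" "\<tau> ` A k = B k"
    using extend_conjugacy_by_fixed_blocks[OF f g \<sigma> \<open>finite S\<close> S
        finite_fixed_block[OF A k(2)] finite_fixed_block[OF B k(2)] card fixed(1) k(3) fixed(2) k(4)]
    by blast
  moreover have "E \<subseteq> S"
    using f_periodic by (auto simp: S_def)
  ultimately show ?thesis
    using k(1,2) by blast
qed

section \<open>Genericity in the topology of pointwise convergence\<close>

lemma ex_strict_mono_iff_unbounded:
  "(\<exists>r::nat \<Rightarrow> nat. strict_mono r \<and> (\<forall>l. P (r l))) \<longleftrightarrow> (\<forall>N. \<exists>k\<ge>N. P k)"
proof
  assume "\<exists>r::nat \<Rightarrow> nat. strict_mono r \<and> (\<forall>l. P (r l))"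
  then show "\<forall>N. \<exists>k\<ge>N. P k"
    using seq_suble by blast
next
  assume "\<forall>N. \<exists>k\<ge>N. P k"
  then have "infinite {k. P k}"
    by (simp add: infinite_nat_iff_unbounded_le)
  then show "\<exists>r::nat \<Rightarrow> nat. strict_mono r \<and> (\<forall>l. P (r l))"
    using infinite_enumerate by fastforce
qed

lemma generic_in_INT_dense_open:
  assumes "\<And>N. openin T (U N)" and "\<And>N W. openin T W \<Longrightarrow> W \<noteq> {} \<Longrightarrow> W \<inter> U N \<noteq> {}"
  shows "generic_in T (\<Inter>N::nat. U N)"
proof -
  have closed: "closedin T (topspace T - U N)" for N
    using assms(1) by (simp add: openin_closedin_eq)
  have nowhere_dense: "T interior_of (topspace T - U N) = {}" for N
    unfolding interior_of_eq_empty using assms(2) by blast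
  have "meagre_in T (topspace T - (\<Inter>N. U N))"
    unfolding meagre_in_def
    by (rule exI[of _ "\<lambda>N. topspace T - U N"]) (use closed nowhere_dense in auto)
  moreover have "(\<Inter>N. U N) \<subseteq> topspace T"
    using openin_subset[OF assms(1)] by blast
  ultimately show ?thesis
    by (simp add: generic_in_def)
qed

lemma topspace_pointwise_top [simp]: "topspace pointwise_top = UNIV"
  by (simp add: pointwise_top_def)

lemma openin_pointwise_agree:
  assumes "finite E"
  shows "openin (subtopology pointwise_top Z) {\<tau> \<in> Z. \<forall>x\<in>E. \<tau> x = \<sigma> x}"
proof -
  let ?X = "\<lambda>x. if x \<in> E then {\<sigma> x} else UNIV"
  have "openin pointwise_top (\<Pi>\<^sub>E x\<in>UNIV. ?X x)"
    unfolding pointwise_top_def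
    by (rule product_topology_basis) (use assms in \<open>auto intro: finite_subset\<close>)
  moreover have "{\<tau> \<in> Z. \<forall>x\<in>E. \<tau> x = \<sigma> x} = (\<Pi>\<^sub>E x\<in>UNIV. ?X x) \<inter> Z"
    by (auto simp: PiE_iff; metis singletonD)
  ultimately show ?thesis
    unfolding openin_subtopology by blast
qed

lemma pointwise_neighbourhood:
  assumes "openin (subtopology pointwise_top Z) W" and "\<sigma> \<in> W"
  obtains E where "finite E" and "{\<tau> \<in> Z. \<forall>x\<in>E. \<tau> x = \<sigma> x} \<subseteq> W"
proof -
  obtain W' where W': "openin pointwise_top W'" "W = W' \<inter> Z"
    using assms(1) unfolding openin_subtopology by blast
  then obtain X where "finite {x. X x \<noteq> UNIV}" and "\<sigma> \<in> (\<Pi>\<^sub>E x\<in>UNIV. X x)"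
    and "(\<Pi>\<^sub>E x\<in>UNIV. X x) \<subseteq> W'"
    using assms(2) unfolding pointwise_top_def openin_product_topology_alt by auto
  moreover have "{\<tau> \<in> Z. \<forall>x\<in>{x. X x \<noteq> UNIV}. \<tau> x = \<sigma> x} \<subseteq> (\<Pi>\<^sub>E x\<in>UNIV. X x) \<inter> Z"
    using \<open>\<sigma> \<in> (\<Pi>\<^sub>E x\<in>UNIV. X x)\<close> by (auto simp: PiE_iff) (metis UNIV_I)
  ultimately show ?thesis
    using that W'(2) by blast
qed

lemma openin_some_block_matched:
  fixes A B :: "nat \<Rightarrow> int set"
  assumes finite_A: "\<And>k. k \<ge> 1 \<Longrightarrow> finite (A k)"
  shows "openin (subtopology pointwise_top Z) {\<sigma> \<in> Z. \<exists>k\<ge>N. k \<ge> 1 \<and> \<sigma> ` A k = B k}"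
    (is "openin ?T ?U")
proof (subst openin_subopen, intro ballI)
  fix \<sigma>
  assume "\<sigma> \<in> ?U"
  then obtain k where k: "\<sigma> \<in> Z" "k \<ge> N" "k \<ge> 1" "\<sigma> ` A k = B k"
    by auto
  let ?V = "{\<tau> \<in> Z. \<forall>x\<in>A k. \<tau> x = \<sigma> x}"
  have "?V \<subseteq> ?U"
  proof
    fix \<tau>
    assume \<tau>: "\<tau> \<in> ?V"
    then have "\<tau> ` A k = \<sigma> ` A k"
      by (intro image_cong) simp_all
    with k(4) have "\<tau> ` A k = B k"
      by simp
    with \<tau> k(2,3) show "\<tau> \<in> ?U"
      by blast
  qed
  moreover have "openin ?T ?V"
    by (rule openin_pointwise_agree[OF finite_A[OF k(3)]])
  moreover have "\<sigma> \<in> ?V"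
    using k(1) by simp
  ultimately show "\<exists>V. openin ?T V \<and> \<sigma> \<in> V \<and> V \<subseteq> ?U"
    by (intro exI[of _ ?V]) simp
qed

lemma generic_in_frequently_matching:
  fixes Z :: "(int \<Rightarrow> int) set" and A B :: "nat \<Rightarrow> int set"
  assumes finite_A: "\<And>k. k \<ge> 1 \<Longrightarrow> finite (A k)"
    and dense: "\<And>\<sigma> E N. \<sigma> \<in> Z \<Longrightarrow> finite E \<Longrightarrow>
      \<exists>k\<ge>N. k \<ge> 1 \<and> (\<exists>\<tau>\<in>Z. (\<forall>x\<in>E. \<tau> x = \<sigma> x) \<and> \<tau> ` A k = B k)"
  shows "generic_in (subtopology pointwise_top Z)
    {\<sigma> \<in> Z. \<exists>r::nat \<Rightarrow> nat. strict_mono r \<and> (\<forall>l. r l \<ge> 1 \<and> \<sigma> ` A (r l) = B (r l))}"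
proof -
  let ?T = "subtopology pointwise_top Z"
  define U where "U N = {\<sigma> \<in> Z. \<exists>k\<ge>N. k \<ge> 1 \<and> \<sigma> ` A k = B k}" for N
  have "openin ?T (U N)" for N
    unfolding U_def by (rule openin_some_block_matched[OF finite_A])
  moreover have "W \<inter> U N \<noteq> {}" if W: "openin ?T W" and "W \<noteq> {}" for W N
  proof -
    obtain \<sigma> where "\<sigma> \<in> W"
      using \<open>W \<noteq> {}\<close> by blast
    then have "\<sigma> \<in> Z"
      using openin_subset[OF W] by auto
    obtain E where "finite E" and E: "{\<tau> \<in> Z. \<forall>x\<in>E. \<tau> x = \<sigma> x} \<subseteq> W"
      using pointwise_neighbourhood[OF W \<open>\<sigma> \<in> W\<close>] by blast
    obtain k \<tau> where "k \<ge> N" "k \<ge> 1" "\<tau> \<in> Z" "\<forall>x\<in>E. \<tau> x = \<sigma> x" "\<tau> ` A k = B k"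
      using dense[OF \<open>\<sigma> \<in> Z\<close> \<open>finite E\<close>, of N] by blast
    then have "\<tau> \<in> W \<inter> U N"
      using E unfolding U_def by blast
    then show ?thesis
      by blast
  qed
  ultimately have generic: "generic_in ?T (\<Inter>N. U N)"
    by (rule generic_in_INT_dense_open)
  have membership: "\<sigma> \<in> (\<Inter>N. U N) \<longleftrightarrow>
      \<sigma> \<in> Z \<and> (\<exists>r::nat \<Rightarrow> nat. strict_mono r \<and> (\<forall>l. r l \<ge> 1 \<and> \<sigma> ` A (r l) = B (r l)))" for \<sigma>
  proof -
    have "\<sigma> \<in> (\<Inter>N. U N) \<longleftrightarrow> \<sigma> \<in> Z \<and> (\<forall>N. \<exists>k\<ge>N. k \<ge> 1 \<and> \<sigma> ` A k = B k)"
      by (auto simp: U_def)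
    then show ?thesis
      using ex_strict_mono_iff_unbounded[of "\<lambda>k. k \<ge> 1 \<and> \<sigma> ` A k = B k"] by simp
  qed
  have "(\<Inter>N. U N) = {\<sigma> \<in> Z. \<exists>r::nat \<Rightarrow> nat. strict_mono r \<and> (\<forall>l. r l \<ge> 1 \<and> \<sigma> ` A (r l) = B (r l))}"
    by (intro equalityI subsetI) (simp_all only: membership mem_Collect_eq)
  with generic show ?thesis
    by simp
qed

theorem proposition13:
  fixes n m :: nat and c d :: word
    and \<alpha> \<alpha>' :: "nat \<Rightarrow> int \<Rightarrow> int" and A B :: "nat \<Rightarrow> int set"
  assumes "n \<ge> 1" and "m \<ge> 1"
    and "c \<in> words_on (Suc n)" and "c \<noteq> []" and "cyclically_reduced c" and "exp_sum n c = 0"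
    and "d \<in> words_on (Suc m)" and "d \<noteq> []" and "cyclically_reduced d" and "exp_sum m d = 0"
    and "good_action n \<alpha> c A"
    and "good_action m \<alpha>' d B"
  shows "generic_in
           (subtopology pointwise_top
              {\<sigma>. bij \<sigma> \<and> \<sigma> \<circ> word_act (gens n \<alpha>) c = word_act (gens m \<alpha>') d \<circ> \<sigma>})
           {\<sigma>. bij \<sigma> \<and> \<sigma> \<circ> word_act (gens n \<alpha>) c = word_act (gens m \<alpha>') d \<circ> \<sigma> \<and>
                (\<exists>r :: nat \<Rightarrow> nat. strict_mono r \<and> (\<forall>l. r l \<ge> 1 \<and> \<sigma> ` A (r l) = B (r l)))}"
proof -
  let ?f = "word_act (gens n \<alpha>) c" and ?g = "word_act (gens m \<alpha>') d"
  define Z where "Z = {\<sigma>. bij \<sigma> \<and> \<sigma> \<circ> ?f = ?g \<circ> \<sigma>}"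
  have f: "abundant_finite_cycles ?f" "fixed_block_family ?f A"
    using good_action_cycle_structure[OF assms(11,3,5)] by simp_all
  have g: "abundant_finite_cycles ?g" "fixed_block_family ?g B"
    using good_action_cycle_structure[OF assms(12,7,9)] by simp_all
  have "\<exists>k\<ge>N. k \<ge> 1 \<and> (\<exists>\<tau>\<in>Z. (\<forall>x\<in>E. \<tau> x = \<sigma> x) \<and> \<tau> ` A k = B k)"
    if "\<sigma> \<in> Z" and "finite E" for \<sigma> E N
    using conjugacy_matching_block[OF f(1) g(1) f(2) g(2) _ _ \<open>finite E\<close>, of \<sigma> N] that
    by (simp add: Z_def)
  with finite_fixed_block[OF f(2)]
  have "generic_in (subtopology pointwise_top Z)
    {\<sigma> \<in> Z. \<exists>r::nat \<Rightarrow> nat. strict_mono r \<and> (\<forall>l. r l \<ge> 1 \<and> \<sigma> ` A (r l) = B (r l))}"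
    by (rule generic_in_frequently_matching)
  then show ?thesis
    by (simp only: Z_def mem_Collect_eq conj_assoc)
qed

end
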